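(* Let $N\ge2$, $M\geq0$, and let $U$ be the vector space with orthonormal basis $e_0,\dots,e_M$. For $n\ge1$ let $\alpha_n$ act on $U$ by $\alpha_ne_k=e_{k-n}$ if $k-n\geq0$ and $0$ otherwise, and let $\alpha_{-n}=\alpha_n^*$ (so $\alpha_{-n}e_k=e_{k+n}$ if $k+n\le M$, else $0$). Let $\mathfrak{W}=\exp\big(\sum_{n<0,N\nmid n}\alpha_n/n\big)\exp\big(\sum_{n>0,N\nmid n}\alpha_n/n\big)$ acting on $U$. Then for all $0\le k,l\le M$, $\langle e_k\,|\,\mathfrak{W}\,|\,e_l\rangle$ equals the coefficient of $x^ky^l$ in $$f(x,y)=\frac{1}{1-xy}\cdot\frac{1-x}{(1-x^N)^{1/N}}\cdot\frac{(1-y^N)^{1/N}}{1-y}.$$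
   Context: Power series are expanded at $x=y=0$ using the binomial series for $(1-x^N)^{\mp1/N}$. *)

theory Defs
  imports "Jordan_Normal_Form.Matrix" "HOL-Computational_Algebra.Formal_Power_Series"
    "HOL-Analysis.Infinite_Sum"
begin

text \<open>Operators on U = span(e_0,...,e_M) are represented by real (M+1)x(M+1) matrices
  w.r.t. the orthonormal basis; column j is the image of e_j, so the matrix element
  <e_k | A | e_l> is A $$ (k,l).\<close>

definition alpha_pos :: "nat \<Rightarrow> nat \<Rightarrow> real mat" where
  "alpha_pos M n = mat (Suc M) (Suc M) (\<lambda>(i, j). if n \<le> j \<and> i = j - n then 1 else 0)"

text \<open>alpha_n for n > 0, and alpha_(-n) = adjoint of alpha_n (= transpose, real orthonormal basis).\<close>
definition alpha :: "nat \<Rightarrow> int \<Rightarrow> real mat" where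
  "alpha M n = (if n > 0 then alpha_pos M (nat n) else transpose_mat (alpha_pos M (nat (- n))))"

text \<open>The operator sum over n in S of alpha_n / n (entrywise an unconditional sum;
  only finitely many terms are nonzero).\<close>
definition alpha_sum :: "nat \<Rightarrow> int set \<Rightarrow> real mat" where
  "alpha_sum M S = mat (Suc M) (Suc M) (\<lambda>(i, j). \<Sum>\<^sub>\<infinity>n\<in>S. (alpha M n $$ (i, j)) / real_of_int n)"

definition mat_exp :: "real mat \<Rightarrow> real mat" where
  "mat_exp A = mat (dim_row A) (dim_col A) (\<lambda>(i, j). \<Sum>m. (A ^\<^sub>m m) $$ (i, j) / fact m)"

definition W_op :: "nat \<Rightarrow> nat \<Rightarrow> real mat" where
  "W_op M N = mat_exp (alpha_sum M {n. n < 0 \<and> \<not> int N dvd n})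
             * mat_exp (alpha_sum M {n. n > 0 \<and> \<not> int N dvd n})"

definition one_minus_pow_powr :: "nat \<Rightarrow> real \<Rightarrow> real fps" where
  "one_minus_pow_powr N a = fps_compose (fps_binomial a) (- (fps_X ^ N))"

text \<open>Bivariate power series in x,y as real fps fps: the outer variable is x, the inner is y;
  the coefficient of x^k y^l in F is F $ k $ l.\<close>
definition lift_x :: "real fps \<Rightarrow> real fps fps" where
  "lift_x g = Abs_fps (\<lambda>k. fps_const (fps_nth g k))"

definition lift_y :: "real fps \<Rightarrow> real fps fps" where
  "lift_y h = fps_const h"

definition var_x :: "real fps fps" where "var_x = fps_X"
definition var_y :: "real fps fps" where "var_y = fps_const fps_X"

definition f_gen :: "nat \<Rightarrow> real fps fps" where
  "f_gen N = inverse (1 - var_x * var_y)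
     * lift_x ((1 - fps_X) * one_minus_pow_powr N (- 1 / real N))
     * lift_y (one_minus_pow_powr N (1 / real N) * inverse (1 - fps_X))"

end

theory Submission
  imports Defs
begin

text \<open>On the basis e_0, ..., e_M, the operator \<Sum>\<alpha>_n/n over the positive n not divisible by N is the
  upper triangular Toeplitz matrix of the series a(t) = \<Sum> t^d/d over the d not divisible by N, and the
  sum over the negative n is the lower triangular Toeplitz matrix of -a. Such matrices multiply
  like their series, so the two exponentials are the Toeplitz matrices of exp(\<plusminus>a). Since
  a = -log(1 - t) + log(1 - t^N)/N, we get exp(a) = (1 - t^N)^(1/N)/(1 - t) and
  exp(-a) = (1 - t)(1 - t^N)^(-1/N); formally, both sides of each identity satisfy the same linear
  differential equation and have constant term 1. Finally, the (k, l) entry of the product of the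
  lower Toeplitz matrix of g with the upper one of h is \<Sum>_p g(k-p) h(l-p), which is the coefficient
  of x^k y^l in g(x) h(y)/(1 - x y).\<close>

definition upper_toeplitz :: "nat \<Rightarrow> 'a::zero fps \<Rightarrow> 'a mat" where
  "upper_toeplitz n a = mat n n (\<lambda>(i, j). if i \<le> j then fps_nth a (j - i) else 0)"

definition lower_toeplitz :: "nat \<Rightarrow> 'a::zero fps \<Rightarrow> 'a mat" where
  "lower_toeplitz n a = mat n n (\<lambda>(i, j). if j \<le> i then fps_nth a (i - j) else 0)"

lemma upper_toeplitz_carrier [simp]:
  "dim_row (upper_toeplitz n a) = n" "dim_col (upper_toeplitz n a) = n"
  "upper_toeplitz n a \<in> carrier_mat n n"
  by (simp_all add: upper_toeplitz_def)

lemma lower_toeplitz_carrier [simp]: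
  "dim_row (lower_toeplitz n a) = n" "dim_col (lower_toeplitz n a) = n"
  "lower_toeplitz n a \<in> carrier_mat n n"
  by (simp_all add: lower_toeplitz_def)

lemma upper_toeplitz_index [simp]:
  "i < n \<Longrightarrow> j < n \<Longrightarrow> upper_toeplitz n a $$ (i, j) = (if i \<le> j then fps_nth a (j - i) else 0)"
  by (simp add: upper_toeplitz_def)

lemma lower_toeplitz_index [simp]:
  "i < n \<Longrightarrow> j < n \<Longrightarrow> lower_toeplitz n a $$ (i, j) = (if j \<le> i then fps_nth a (i - j) else 0)"
  by (simp add: lower_toeplitz_def)

lemma lower_toeplitz_eq_transpose: "lower_toeplitz n a = transpose_mat (upper_toeplitz n a)"
  by (rule eq_matI) auto

lemma lower_toeplitz_uminus:
  "lower_toeplitz n (- a) = - transpose_mat (upper_toeplitz n (a :: 'a::ab_group_add fps))"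
  by (rule eq_matI) auto

lemma sum_fps_convolution_window:
  fixes a b :: "'a::comm_semiring_1 fps"
  assumes "j < n"
  shows "(\<Sum>p<n. (if i \<le> p then fps_nth a (p - i) else 0) * (if p \<le> j then fps_nth b (j - p) else 0))
       = (if i \<le> j then fps_nth (a * b) (j - i) else 0)"
proof (cases "i \<le> j")
  case True
  have "(\<Sum>p<n. (if i \<le> p then fps_nth a (p - i) else 0) * (if p \<le> j then fps_nth b (j - p) else 0))
      = (\<Sum>p\<in>{i..j}. fps_nth a (p - i) * fps_nth b (j - p))"
    using assms by (intro sum.mono_neutral_cong_right) auto
  also have "\<dots> = (\<Sum>q\<le>j - i. fps_nth a q * fps_nth b (j - i - q))"
    using True by (intro sum.reindex_bij_witness[of _ "\<lambda>q. q + i" "\<lambda>p. p - i"]) auto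
  finally show ?thesis
    using True by (simp add: fps_mult_nth atLeast0AtMost)
qed (auto intro: sum.neutral)

lemma upper_toeplitz_mult:
  fixes a b :: "'a::comm_semiring_1 fps"
  shows "upper_toeplitz n a * upper_toeplitz n b = upper_toeplitz n (a * b)"
  by (rule eq_matI)
    (simp_all add: scalar_prod_def atLeast0LessThan sum_fps_convolution_window)

lemma lower_toeplitz_mult:
  fixes a b :: "'a::comm_semiring_1 fps"
  shows "lower_toeplitz n a * lower_toeplitz n b = lower_toeplitz n (a * b)"
proof -
  have "lower_toeplitz n a * lower_toeplitz n b = transpose_mat (upper_toeplitz n b * upper_toeplitz n a)"
    by (simp add: lower_toeplitz_eq_transpose transpose_mult[of _ n n _ n])
  then show ?thesis
    by (simp add: upper_toeplitz_mult lower_toeplitz_eq_transpose mult.commute)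
qed

lemma upper_toeplitz_one: "upper_toeplitz n 1 = 1\<^sub>m n"
  by (rule eq_matI) auto

lemma lower_toeplitz_one: "lower_toeplitz n 1 = 1\<^sub>m n"
  by (rule eq_matI) auto

lemma upper_toeplitz_power:
  "upper_toeplitz n (a :: 'a::comm_semiring_1 fps) ^\<^sub>m m = upper_toeplitz n (a ^ m)"
  by (induction m) (simp_all add: upper_toeplitz_one upper_toeplitz_mult mult.commute)

lemma lower_toeplitz_power:
  "lower_toeplitz n (a :: 'a::comm_semiring_1 fps) ^\<^sub>m m = lower_toeplitz n (a ^ m)"
  by (induction m) (simp_all add: lower_toeplitz_one lower_toeplitz_mult mult.commute)

lemma lower_mult_upper_toeplitz_index:
  fixes a b :: "'a::comm_semiring_1 fps"
  assumes "k < n" "l < n"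
  shows "(lower_toeplitz n a * upper_toeplitz n b) $$ (k, l)
       = (\<Sum>p\<le>min k l. fps_nth a (k - p) * fps_nth b (l - p))"
proof -
  have "(lower_toeplitz n a * upper_toeplitz n b) $$ (k, l)
      = (\<Sum>p<n. (if p \<le> k then fps_nth a (k - p) else 0) * (if p \<le> l then fps_nth b (l - p) else 0))"
    using assms by (simp add: scalar_prod_def atLeast0LessThan)
  also have "\<dots> = (\<Sum>p\<le>min k l. fps_nth a (k - p) * fps_nth b (l - p))"
    using assms by (intro sum.mono_neutral_cong_right) auto
  finally show ?thesis .
qed

lemma suminf_fps_power_nth_over_fact:
  fixes a :: "real fps"
  assumes "fps_nth a 0 = 0"
  shows "(\<Sum>m. fps_nth (a ^ m) d / fact m) = fps_nth (fps_exp 1 oo a) d"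
proof -
  have "(\<Sum>m. fps_nth (a ^ m) d / fact m) = (\<Sum>m\<le>d. fps_nth (a ^ m) d / fact m)"
    using startsby_zero_power_prefix[OF assms] by (intro suminf_finite) auto
  then show ?thesis
    by (simp add: fps_compose_nth atLeast0AtMost)
qed

lemma mat_exp_upper_toeplitz:
  "fps_nth a 0 = 0 \<Longrightarrow> mat_exp (upper_toeplitz n a) = upper_toeplitz n (fps_exp 1 oo a)"
  unfolding mat_exp_def
  by (rule eq_matI) (simp_all add: upper_toeplitz_power suminf_fps_power_nth_over_fact)

lemma mat_exp_lower_toeplitz:
  "fps_nth a 0 = 0 \<Longrightarrow> mat_exp (lower_toeplitz n a) = lower_toeplitz n (fps_exp 1 oo a)"
  unfolding mat_exp_def
  by (rule eq_matI) (simp_all add: lower_toeplitz_power suminf_fps_power_nth_over_fact)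

definition harmonic_fps :: "int set \<Rightarrow> real fps" where
  "harmonic_fps S = Abs_fps (\<lambda>d. if int d \<in> S then 1 / real d else 0)"

lemma harmonic_fps_nth_0 [simp]: "fps_nth (harmonic_fps S) 0 = 0"
  by (simp add: harmonic_fps_def)

lemma infsum_if_eq:
  fixes f :: "'a \<Rightarrow> 'b::{comm_monoid_add, t2_space}"
  shows "(\<Sum>\<^sub>\<infinity>x\<in>S. if x = a then f x else 0) = (if a \<in> S then f a else 0)"
proof -
  have "(\<Sum>\<^sub>\<infinity>x\<in>S. if x = a then f x else 0) = (\<Sum>\<^sub>\<infinity>x\<in>S \<inter> {a}. if x = a then f x else 0)"
    by (rule infsum_cong_neutral) auto
  then show ?thesis
    by (cases "a \<in> S") auto
qed

lemma alpha_sum_positive: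
  assumes "S \<subseteq> {0<..}"
  shows "alpha_sum M S = upper_toeplitz (Suc M) (harmonic_fps S)"
proof (rule eq_matI)
  fix i j assume "i < dim_row (upper_toeplitz (Suc M) (harmonic_fps S))"
    "j < dim_col (upper_toeplitz (Suc M) (harmonic_fps S))"
  then have ij: "i \<le> M" "j \<le> M" by simp_all
  have "(\<Sum>\<^sub>\<infinity>n\<in>S. alpha M n $$ (i, j) / real_of_int n)
      = (\<Sum>\<^sub>\<infinity>n\<in>S. if n = int j - int i then 1 / real_of_int n else 0)"
    using assms ij by (intro infsum_cong) (auto simp: alpha_def alpha_pos_def)
  also have "\<dots> = (if i \<le> j then fps_nth (harmonic_fps S) (j - i) else 0)"
    using assms by (auto simp: infsum_if_eq harmonic_fps_def)
  finally show "alpha_sum M S $$ (i, j) = upper_toeplitz (Suc M) (harmonic_fps S) $$ (i, j)"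
    using ij by (simp add: alpha_sum_def)
qed (simp_all add: alpha_sum_def)

lemma alpha_sum_uminus_image:
  assumes "S \<subseteq> {0<..}"
  shows "alpha_sum M (uminus ` S) = - transpose_mat (alpha_sum M S)"
proof (rule eq_matI)
  fix i j assume "i < dim_row (- transpose_mat (alpha_sum M S))"
    "j < dim_col (- transpose_mat (alpha_sum M S))"
  then have ij: "i < Suc M" "j < Suc M" by (simp_all add: alpha_sum_def)
  have "(\<Sum>\<^sub>\<infinity>n\<in>uminus ` S. alpha M n $$ (i, j) / real_of_int n)
      = (\<Sum>\<^sub>\<infinity>n\<in>S. - (alpha M n $$ (j, i) / real_of_int n))"
    using assms ij
    by (subst infsum_reindex) (auto intro!: infsum_cong simp: alpha_def alpha_pos_def)
  also have "\<dots> = - (\<Sum>\<^sub>\<infinity>n\<in>S. alpha M n $$ (j, i) / real_of_int n)"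
    by (rule infsum_uminus)
  finally show "alpha_sum M (uminus ` S) $$ (i, j) = (- transpose_mat (alpha_sum M S)) $$ (i, j)"
    using ij by (simp add: alpha_sum_def)
qed (simp_all add: alpha_sum_def)

lemma fps_ode_unique:
  fixes F G P Q :: "'a::field_char_0 fps"
  assumes "fps_deriv F * P = F * Q" "fps_deriv G * P = G * Q"
    and "fps_nth P 0 \<noteq> 0" "fps_nth F 0 = fps_nth G 0"
  shows "F = G"
proof -
  define D where "D = F - G"
  define c where "c = Q * inverse P"
  have "fps_deriv D * P = D * Q"
    using assms(1,2) by (simp add: D_def algebra_simps)
  then have "fps_deriv D * P * inverse P = D * Q * inverse P"
    by simp
  then have D_deriv: "fps_deriv D = D * c"
    using inverse_mult_eq_1'[OF assms(3)] by (simp add: c_def mult.assoc)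
  have "\<forall>m\<le>n. fps_nth D m = 0" for n
  proof (induction n)
    case 0
    then show ?case using assms(4) by (simp add: D_def)
  next
    case (Suc n)
    have "fps_nth (D * c) n = 0"
      unfolding fps_mult_nth using Suc.IH by (intro sum.neutral) auto
    then have "fps_nth D (Suc n) = 0"
      using arg_cong[OF D_deriv, of "\<lambda>x. fps_nth x n"] by (simp del: of_nat_Suc)
    then show ?case
      using Suc.IH le_Suc_eq by auto
  qed
  then show ?thesis
    by (auto simp: D_def fps_eq_iff)
qed

lemma fps_ode_mult:
  fixes F G P Q R :: "'a::comm_ring_1 fps"
  assumes "fps_deriv F * P = F * Q" "fps_deriv G * P = G * R"
  shows "fps_deriv (F * G) * P = (F * G) * (Q + R)"
proof -
  have "fps_deriv (F * G) * P = (fps_deriv F * P) * G + F * (fps_deriv G * P)"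
    by (simp add: algebra_simps)
  also have "\<dots> = (F * Q) * G + F * (G * R)"
    by (simp only: assms)
  finally show ?thesis
    by (simp add: algebra_simps)
qed

lemma fps_deriv_exp_compose:
  fixes a :: "'a::field_char_0 fps"
  assumes "fps_nth a 0 = 0"
  shows "fps_deriv (fps_exp 1 oo a) = (fps_exp 1 oo a) * fps_deriv a"
  using assms by (simp add: fps_compose_deriv)

lemma fps_deriv_inverse_one_minus_X:
  "fps_deriv (inverse (1 - fps_X :: 'a::field fps)) * (1 - fps_X) = inverse (1 - fps_X)"
proof -
  have unit: "inverse (1 - fps_X :: 'a fps) * (1 - fps_X) = 1"
    by (simp add: inverse_mult_eq_1)
  have "fps_deriv (inverse (1 - fps_X :: 'a fps)) * (1 - fps_X)
      = inverse (1 - fps_X) * (inverse (1 - fps_X) * (1 - fps_X))"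
    by (simp add: fps_inverse_deriv power2_eq_square algebra_simps)
  then show ?thesis
    by (simp add: unit)
qed

lemma one_minus_pow_powr_nth_0 [simp]: "fps_nth (one_minus_pow_powr N c) 0 = 1"
  by (simp add: one_minus_pow_powr_def)

lemma one_minus_pow_powr_deriv:
  assumes "N \<ge> 1"
  shows "(1 - fps_X ^ N) * fps_deriv (one_minus_pow_powr N c)
       = - fps_const (c * real N) * fps_X ^ (N - 1) * one_minus_pow_powr N c"
proof -
  define u :: "real fps" where "u = - (fps_X ^ N)"
  have u0: "fps_nth u 0 = 0"
    using assms by (simp add: u_def)
  have one_plus_u: "(1 + fps_X) oo u = 1 - fps_X ^ N"
    using u0 by (simp add: fps_compose_add_distrib u_def)
  have unit: "fps_nth (1 + fps_X :: real fps) 0 \<noteq> 0"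
    by simp
  have binomial_ode: "(1 + fps_X) * fps_deriv (fps_binomial c) = fps_const c * fps_binomial c"
  proof -
    have "fps_deriv (fps_binomial c) = fps_const c * fps_binomial c * inverse (1 + fps_X)"
      using fps_binomial_deriv[of c] fps_divide_unit[OF unit] by simp
    then have "(1 + fps_X) * fps_deriv (fps_binomial c)
        = fps_const c * fps_binomial c * (inverse (1 + fps_X) * (1 + fps_X))"
      by (simp add: ac_simps)
    then show ?thesis
      using inverse_mult_eq_1[OF unit] by simp
  qed
  have B: "one_minus_pow_powr N c = fps_binomial c oo u"
    by (simp add: one_minus_pow_powr_def u_def)
  have "(1 - fps_X ^ N) * fps_deriv (one_minus_pow_powr N c)
      = (((1 + fps_X) * fps_deriv (fps_binomial c)) oo u) * fps_deriv u"
    using u0 by (simp add: B fps_compose_deriv fps_compose_mult_distrib one_plus_u mult.assoc)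
  also have "\<dots> = fps_const c * (fps_binomial c oo u) * fps_deriv u"
    using u0 by (simp add: binomial_ode fps_compose_mult_distrib)
  also have "\<dots> = - fps_const (c * real N) * fps_X ^ (N - 1) * one_minus_pow_powr N c"
    by (simp add: B u_def fps_deriv_power algebra_simps flip: fps_const_mult)
  finally show ?thesis .
qed

lemma fps_deriv_harmonic_fps_nth:
  "fps_nth (fps_deriv (harmonic_fps S)) m = (if int (Suc m) \<in> S then 1 else 0)"
  by (simp add: harmonic_fps_def del: of_nat_Suc)

lemma harmonic_nondvd_deriv_mult:
  assumes "N \<ge> 1"
  shows "fps_deriv (harmonic_fps {n. 0 < n \<and> \<not> int N dvd n}) * (1 - fps_X ^ N) = (\<Sum>i<N - 1. fps_X ^ i)"
proof (rule fps_ext)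
  fix m
  define D where "D = fps_deriv (harmonic_fps {n. 0 < n \<and> \<not> int N dvd n})"
  have D_nth: "fps_nth D k = (if N dvd Suc k then 0 else 1)" for k
    unfolding D_def fps_deriv_harmonic_fps_nth by (simp del: of_nat_Suc)
  have "fps_nth (D * (1 - fps_X ^ N)) m = fps_nth D m - (if m < N then 0 else fps_nth D (m - N))"
    using fps_X_power_mult_nth[of N D m] by (simp add: algebra_simps)
  also have "\<dots> = (if m < N - 1 then 1 else 0)"
  proof (cases "m < N")
    case True
    then have "N dvd Suc m \<longleftrightarrow> Suc m = N"
      using dvd_imp_le[of N "Suc m"] by auto
    then show ?thesis
      using True by (auto simp: D_nth)
  next
    case False
    then have "Suc m = Suc (m - N) + N"
      by simp
    then have "N dvd Suc m \<longleftrightarrow> N dvd Suc (m - N)"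
      by (metis dvd_add_triv_right_iff)
    then show ?thesis
      using False by (simp add: D_nth)
  qed
  also have "\<dots> = fps_nth (\<Sum>i<N - 1. fps_X ^ i :: real fps) m"
    by (simp add: fps_sum_nth)
  finally show "fps_nth (D * (1 - fps_X ^ N)) m = fps_nth (\<Sum>i<N - 1. fps_X ^ i :: real fps) m" .
qed

lemma harmonic_nondvd_ode:
  assumes "N \<ge> 1"
  shows "fps_deriv (harmonic_fps {n. 0 < n \<and> \<not> int N dvd n}) * ((1 - fps_X) * (1 - fps_X ^ N))
       = 1 - fps_X ^ (N - 1)"
proof -
  have "fps_deriv (harmonic_fps {n. 0 < n \<and> \<not> int N dvd n}) * ((1 - fps_X) * (1 - fps_X ^ N))
      = (1 - fps_X) * (fps_deriv (harmonic_fps {n. 0 < n \<and> \<not> int N dvd n}) * (1 - fps_X ^ N))"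
    by (rule mult.left_commute)
  also have "\<dots> = (1 - fps_X) * (\<Sum>i<N - 1. fps_X ^ i)"
    by (simp only: harmonic_nondvd_deriv_mult[OF assms])
  also have "\<dots> = 1 - fps_X ^ (N - 1)"
    by (simp add: one_diff_power_eq)
  finally show ?thesis .
qed

lemma one_minus_pow_powr_ode:
  assumes "N = Suc m"
  shows "fps_deriv (one_minus_pow_powr N c) * ((1 - fps_X) * (1 - fps_X ^ N))
       = one_minus_pow_powr N c * (- fps_const (c * real N) * fps_X ^ m * (1 - fps_X))"
proof -
  have "fps_deriv (one_minus_pow_powr N c) * ((1 - fps_X) * (1 - fps_X ^ N))
      = (1 - fps_X) * ((1 - fps_X ^ N) * fps_deriv (one_minus_pow_powr N c))"
    by (metis mult.commute mult.left_commute)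
  also have "\<dots> = (1 - fps_X) * (- fps_const (c * real N) * fps_X ^ m * one_minus_pow_powr N c)"
    using one_minus_pow_powr_deriv[of N c] assms by simp
  finally show ?thesis
    by (simp add: algebra_simps)
qed

lemma exp_harmonic_nondvd:
  assumes "N \<ge> 1"
  shows "fps_exp 1 oo harmonic_fps {n. 0 < n \<and> \<not> int N dvd n}
       = one_minus_pow_powr N (1 / real N) * inverse (1 - fps_X)"
proof (rule fps_ode_unique[where P = "(1 - fps_X) * (1 - fps_X ^ N)" and Q = "1 - fps_X ^ (N - 1)"])
  obtain m where N: "N = Suc m"
    using assms by (cases N) auto
  have binomial: "fps_deriv (one_minus_pow_powr N (1 / real N)) * ((1 - fps_X) * (1 - fps_X ^ N))
      = one_minus_pow_powr N (1 / real N) * (- (fps_X ^ m * (1 - fps_X)))"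
    using one_minus_pow_powr_ode[OF N, of "1 / real N"] N by simp
  have geometric: "fps_deriv (inverse (1 - fps_X)) * ((1 - fps_X) * (1 - fps_X ^ N))
      = inverse (1 - fps_X) * (1 - fps_X ^ N :: real fps)"
    using fps_deriv_inverse_one_minus_X by (metis mult.assoc)
  have sum: "- (fps_X ^ m * (1 - fps_X)) + (1 - fps_X ^ N) = (1 - fps_X ^ (N - 1) :: real fps)"
    using N by (simp add: algebra_simps)
  show "fps_deriv (one_minus_pow_powr N (1 / real N) * inverse (1 - fps_X)) * ((1 - fps_X) * (1 - fps_X ^ N))
      = one_minus_pow_powr N (1 / real N) * inverse (1 - fps_X) * (1 - fps_X ^ (N - 1))"
    using fps_ode_mult[OF binomial geometric] unfolding sum .
next
  show "fps_deriv (fps_exp 1 oo harmonic_fps {n. 0 < n \<and> \<not> int N dvd n}) * ((1 - fps_X) * (1 - fps_X ^ N))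
      = (fps_exp 1 oo harmonic_fps {n. 0 < n \<and> \<not> int N dvd n}) * (1 - fps_X ^ (N - 1))"
    by (simp only: fps_deriv_exp_compose harmonic_fps_nth_0 mult.assoc harmonic_nondvd_ode[OF assms])
qed (use assms in simp_all)

lemma exp_neg_harmonic_nondvd:
  assumes "N \<ge> 1"
  shows "fps_exp 1 oo - harmonic_fps {n. 0 < n \<and> \<not> int N dvd n}
       = (1 - fps_X) * one_minus_pow_powr N (- 1 / real N)"
proof (rule fps_ode_unique[where P = "(1 - fps_X) * (1 - fps_X ^ N)" and Q = "- (1 - fps_X ^ (N - 1))"])
  obtain m where N: "N = Suc m"
    using assms by (cases N) auto
  have linear: "fps_deriv (1 - fps_X) * ((1 - fps_X) * (1 - fps_X ^ N))
      = (1 - fps_X) * (- (1 - fps_X ^ N) :: real fps)"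
    by (simp add: algebra_simps)
  have binomial: "fps_deriv (one_minus_pow_powr N (- 1 / real N)) * ((1 - fps_X) * (1 - fps_X ^ N))
      = one_minus_pow_powr N (- 1 / real N) * (fps_X ^ m * (1 - fps_X))"
    using one_minus_pow_powr_ode[OF N, of "- 1 / real N"] N by simp
  have sum: "- (1 - fps_X ^ N) + fps_X ^ m * (1 - fps_X) = (- (1 - fps_X ^ (N - 1)) :: real fps)"
    using N by (simp add: algebra_simps)
  show "fps_deriv ((1 - fps_X) * one_minus_pow_powr N (- 1 / real N)) * ((1 - fps_X) * (1 - fps_X ^ N))
      = (1 - fps_X) * one_minus_pow_powr N (- 1 / real N) * - (1 - fps_X ^ (N - 1))"
    using fps_ode_mult[OF linear binomial] unfolding sum .
next
  show "fps_deriv (fps_exp 1 oo - harmonic_fps {n. 0 < n \<and> \<not> int N dvd n}) * ((1 - fps_X) * (1 - fps_X ^ N))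
      = (fps_exp 1 oo - harmonic_fps {n. 0 < n \<and> \<not> int N dvd n}) * - (1 - fps_X ^ (N - 1))"
  proof -
    have "fps_deriv (fps_exp 1 oo - harmonic_fps {n. 0 < n \<and> \<not> int N dvd n})
        = (fps_exp 1 oo - harmonic_fps {n. 0 < n \<and> \<not> int N dvd n})
          * - fps_deriv (harmonic_fps {n. 0 < n \<and> \<not> int N dvd n})"
      using fps_deriv_exp_compose[of "- harmonic_fps _"] by simp
    then show ?thesis
      by (simp only: mult_minus_left mult_minus_right mult.assoc harmonic_nondvd_ode[OF assms])
  qed
qed (use assms in simp_all)

lemma inverse_one_minus_var_xy: "inverse (1 - var_x * var_y) = Abs_fps (\<lambda>k. fps_X ^ k)"
proof -
  have right_inverse: "(1 - var_x * var_y) * Abs_fps (\<lambda>k. fps_X ^ k) = 1"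
  proof (rule fps_ext)
    fix n
    have "fps_nth (var_x * var_y * Abs_fps (\<lambda>k. fps_X ^ k)) n = (if n = 0 then 0 else fps_X ^ n)"
      by (cases n) (simp_all add: var_x_def var_y_def mult.assoc)
    then show "fps_nth ((1 - var_x * var_y) * Abs_fps (\<lambda>k. fps_X ^ k)) n = fps_nth 1 n"
      by (simp add: algebra_simps)
  qed
  have constant_term: "fps_nth (1 - var_x * var_y) 0 = 1"
    by (simp add: var_x_def var_y_def)
  have "inverse (1 - var_x * var_y) = fps_right_inverse (1 - var_x * var_y) 1"
    by (simp only: fps_inverse_def[of "1 - var_x * var_y"] constant_term fps_inverse_one)
  also have "\<dots> = Abs_fps (\<lambda>k. fps_X ^ k)"
    using fps_lr_inverse_unique_ring1(2)[OF right_inverse] constant_term by simp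
  finally show ?thesis .
qed

lemma f_gen_nth:
  "fps_nth (fps_nth (f_gen N) k) l
   = (\<Sum>p\<le>min k l. fps_nth ((1 - fps_X) * one_minus_pow_powr N (- 1 / real N)) (k - p)
        * fps_nth (one_minus_pow_powr N (1 / real N) * inverse (1 - fps_X)) (l - p))"
proof -
  define g where "g = (1 - fps_X) * one_minus_pow_powr N (- 1 / real N)"
  define h where "h = one_minus_pow_powr N (1 / real N) * inverse (1 - fps_X)"
  have "fps_nth (f_gen N) k = fps_nth (Abs_fps (\<lambda>k. fps_X ^ k) * lift_x g) k * h"
    by (simp add: f_gen_def inverse_one_minus_var_xy lift_y_def g_def h_def)
  also have "fps_nth (Abs_fps (\<lambda>k. fps_X ^ k) * lift_x g) k = (\<Sum>i\<le>k. fps_X ^ i * fps_const (fps_nth g (k - i)))"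
    by (simp add: fps_mult_nth lift_x_def atLeast0AtMost)
  finally have "fps_nth (fps_nth (f_gen N) k) l = (\<Sum>i\<le>k. fps_nth (fps_X ^ i * (fps_const (fps_nth g (k - i)) * h)) l)"
    by (simp add: sum_distrib_right fps_sum_nth mult.assoc)
  also have "\<dots> = (\<Sum>i\<le>k. if l < i then 0 else fps_nth g (k - i) * fps_nth h (l - i))"
    by (simp only: fps_X_power_mult_nth fps_mult_left_const_nth)
  also have "\<dots> = (\<Sum>p\<le>min k l. fps_nth g (k - p) * fps_nth h (l - p))"
    by (intro sum.mono_neutral_cong_right) auto
  finally show ?thesis
    by (simp add: g_def h_def)
qed

lemma negative_nondvd_eq_uminus_image:
  "{n. n < 0 \<and> \<not> int N dvd n} = uminus ` {n. 0 < n \<and> \<not> int N dvd n}"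
  by (auto simp: image_iff) (metis minus_minus neg_0_less_iff_less dvd_minus_iff)

lemma W_op_eq_toeplitz:
  assumes "N \<ge> 1"
  shows "W_op M N = lower_toeplitz (Suc M) ((1 - fps_X) * one_minus_pow_powr N (- 1 / real N))
                  * upper_toeplitz (Suc M) (one_minus_pow_powr N (1 / real N) * inverse (1 - fps_X))"
proof -
  have positive: "{n. 0 < n \<and> \<not> int N dvd n} \<subseteq> {0<..}"
    by auto
  show ?thesis
    unfolding W_op_def negative_nondvd_eq_uminus_image alpha_sum_uminus_image[OF positive]
      alpha_sum_positive[OF positive]
    by (simp add: mat_exp_upper_toeplitz mat_exp_lower_toeplitz exp_harmonic_nondvd[OF assms]
        exp_neg_harmonic_nondvd[OF assms] flip: lower_toeplitz_uminus)
qed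

theorem mainTheorem6:
  fixes N M k l :: nat
  assumes "N \<ge> 2" and "k \<le> M" and "l \<le> M"
  shows "W_op M N $$ (k, l) = fps_nth (fps_nth (f_gen N) k) l"
proof -
  have "N \<ge> 1"
    using assms(1) by simp
  then have "W_op M N $$ (k, l)
      = (lower_toeplitz (Suc M) ((1 - fps_X) * one_minus_pow_powr N (- 1 / real N))
         * upper_toeplitz (Suc M) (one_minus_pow_powr N (1 / real N) * inverse (1 - fps_X))) $$ (k, l)"
    by (simp only: W_op_eq_toeplitz)
  also have "\<dots> = fps_nth (fps_nth (f_gen N) k) l"
    unfolding f_gen_nth using assms(2,3) by (intro lower_mult_upper_toeplitz_index) simp_all
  finally show ?thesis .
qed

end
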